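(* Let $M$ be a matroid on $E$ whose dual is transversal with presentation $\mathcal A=(A_1,\ldots,A_r)$, $r=r^*(M)$; let $e\in E$, ordered so that for some $k\in[r]$, $e\in A_i$ iff $i\le k$. Let $G$ be a minimal $(e,\mathcal A)$-presenting graph on vertex set $[k]$ (identity presenting map), and suppose $G$ is a tree with edge set $\{\{i_1,j_1\},\ldots,\{i_{k-1},j_{k-1}\}\}$. Define $B_m=A_{i_m}\cup A_{j_m}-e$ for $1\le m\le k-1$ and $B_m=A_{m+1}$ for $k\le m\le r-1$. Choose $J\subseteq[r-1]$ and suppose $(M\backslash e)^*$ has presentation $\mathcal C=(C_1,\ldots,C_{r-1})$, where $C_m=B_m$ if $m\notin J$ and $C_m=\mathrm{cl}_{M\backslash e}(B_m)$ if $m\in J$. Let $j\in J$. Then $(C_1,\ldots,C_{j-1},B_j,C_{j+1},\ldots,C_{r-1})$ is also a presentation of $(M\backslash e)^*$.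
   Context: A presentation $\mathcal A$ of a transversal matroid $N$ means $N=M[\mathcal A]$, whose independent sets are the partial transversals of $\mathcal A$. For $X\subseteq E$: $\mathcal A(X)=\{i:A_i\subseteq X\}$ and $\mathcal A_e(X)=\{i\in\mathcal A(X): e\in A_i\}$; $G[U]$ is the induced subgraph on $U$. A graph with vertex set $\mathcal A_e(E)=[k]$ is $(e,\mathcal A)$-presenting if for all distinct $i,j$ the graph $G[\mathcal A_e(\mathrm{cl}_M(A_i\cup A_j))]$ is connected; minimal if deleting any one edge destroys this property. *)

theory Defs
  imports Main
begin

definition matroid :: "'a set \<Rightarrow> ('a set \<Rightarrow> bool) \<Rightarrow> bool" where
  "matroid E I \<longleftrightarrow> finite E \<and> I {} \<and> (\<forall>X. I X \<longrightarrow> X \<subseteq> E)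
     \<and> (\<forall>X Y. I Y \<and> X \<subseteq> Y \<longrightarrow> I X)
     \<and> (\<forall>X Y. I X \<and> I Y \<and> card X < card Y \<longrightarrow> (\<exists>y \<in> Y - X. I (insert y X)))"

definition basis :: "'a set \<Rightarrow> ('a set \<Rightarrow> bool) \<Rightarrow> 'a set \<Rightarrow> bool" where
  "basis E I B \<longleftrightarrow> I B \<and> (\<forall>X. I X \<and> B \<subseteq> X \<longrightarrow> X = B)"

definition dual_indep :: "'a set \<Rightarrow> ('a set \<Rightarrow> bool) \<Rightarrow> 'a set \<Rightarrow> bool" where
  "dual_indep E I X \<longleftrightarrow> X \<subseteq> E \<and> (\<exists>B. basis E I B \<and> X \<inter> B = {})"

definition rank :: "('a set \<Rightarrow> bool) \<Rightarrow> 'a set \<Rightarrow> nat" where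
  "rank I X = Max {card Y | Y. Y \<subseteq> X \<and> I Y}"

definition cl :: "'a set \<Rightarrow> ('a set \<Rightarrow> bool) \<Rightarrow> 'a set \<Rightarrow> 'a set" where
  "cl E I X = {x \<in> E. rank I (insert x X) = rank I X}"

text \<open>Deletion M \ e: ground set E - {e}, independent sets those of M avoiding e.\<close>
definition del_indep :: "('a set \<Rightarrow> bool) \<Rightarrow> 'a \<Rightarrow> 'a set \<Rightarrow> bool" where
  "del_indep I e X \<longleftrightarrow> I X \<and> e \<notin> X"

text \<open>A family (A_1,...,A_n) is encoded as a function A on indices 1..n.\<close>
definition partial_transversal :: "(nat \<Rightarrow> 'a set) \<Rightarrow> nat \<Rightarrow> 'a set \<Rightarrow> bool" where
  "partial_transversal A n X \<longleftrightarrow>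
     (\<exists>f. inj_on f X \<and> f ` X \<subseteq> {1..n} \<and> (\<forall>x\<in>X. x \<in> A (f x)))"

definition is_presentation :: "'a set \<Rightarrow> ('a set \<Rightarrow> bool) \<Rightarrow> (nat \<Rightarrow> 'a set) \<Rightarrow> nat \<Rightarrow> bool" where
  "is_presentation E I' A n \<longleftrightarrow> (\<forall>i\<in>{1..n}. A i \<subseteq> E)
     \<and> (\<forall>X. I' X \<longleftrightarrow> X \<subseteq> E \<and> partial_transversal A n X)"

definition fam_sub :: "(nat \<Rightarrow> 'a set) \<Rightarrow> nat \<Rightarrow> 'a set \<Rightarrow> nat set" where
  "fam_sub A n X = {i \<in> {1..n}. A i \<subseteq> X}"

definition fam_sub_e :: "(nat \<Rightarrow> 'a set) \<Rightarrow> nat \<Rightarrow> 'a \<Rightarrow> 'a set \<Rightarrow> nat set" where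
  "fam_sub_e A n e X = {i \<in> fam_sub A n X. e \<in> A i}"

definition walk_in :: "nat set set \<Rightarrow> nat set \<Rightarrow> nat list \<Rightarrow> bool" where
  "walk_in Ed U p \<longleftrightarrow> p \<noteq> [] \<and> set p \<subseteq> U \<and>
     (\<forall>t < length p - 1. {p ! t, p ! Suc t} \<in> Ed)"

text \<open>The induced subgraph G[U] (edges of Ed with both ends in U) is connected.\<close>
definition connected_on :: "nat set set \<Rightarrow> nat set \<Rightarrow> bool" where
  "connected_on Ed U \<longleftrightarrow> (\<forall>u\<in>U. \<forall>v\<in>U. \<exists>p. walk_in Ed U p \<and> hd p = u \<and> last p = v)"

definition simple_graph :: "nat set \<Rightarrow> nat set set \<Rightarrow> bool" where
  "simple_graph V Ed \<longleftrightarrow> (\<forall>ed\<in>Ed. ed \<subseteq> V \<and> card ed = 2)"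

definition has_cycle :: "nat set set \<Rightarrow> bool" where
  "has_cycle Ed \<longleftrightarrow> (\<exists>p. length p \<ge> 3 \<and> distinct p \<and>
      (\<forall>t < length p - 1. {p ! t, p ! Suc t} \<in> Ed) \<and> {last p, hd p} \<in> Ed)"

definition is_tree :: "nat set \<Rightarrow> nat set set \<Rightarrow> bool" where
  "is_tree V Ed \<longleftrightarrow> simple_graph V Ed \<and> connected_on Ed V \<and> \<not> has_cycle Ed"

definition presenting :: "'a set \<Rightarrow> ('a set \<Rightarrow> bool) \<Rightarrow> (nat \<Rightarrow> 'a set) \<Rightarrow> nat \<Rightarrow> 'a
     \<Rightarrow> nat set set \<Rightarrow> bool" where
  "presenting E I A n e Ed \<longleftrightarrow> simple_graph (fam_sub_e A n e E) Ed \<and>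
     (\<forall>i\<in>fam_sub_e A n e E. \<forall>j\<in>fam_sub_e A n e E. i \<noteq> j \<longrightarrow>
        connected_on Ed (fam_sub_e A n e (cl E I (A i \<union> A j))))"

definition minimal_presenting :: "'a set \<Rightarrow> ('a set \<Rightarrow> bool) \<Rightarrow> (nat \<Rightarrow> 'a set) \<Rightarrow> nat \<Rightarrow> 'a
     \<Rightarrow> nat set set \<Rightarrow> bool" where
  "minimal_presenting E I A n e Ed \<longleftrightarrow> presenting E I A n e Ed \<and>
     (\<forall>ed\<in>Ed. \<not> presenting E I A n e (Ed - {ed}))"

end

theory Submission
  imports Defs
begin

text \<open>
  The family \<open>B\<close> already presents \<open>(M\e)\<^sup>*\<close>, and \<open>B \<le> C(j := B j) \<le> C\<close> termwise.
  Since \<open>e \<in> A\<^sub>1\<close>, \<open>e\<close> is coindependent in \<open>M\<close>, so every basis of \<open>M\e\<close> is a basis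
  of \<open>M\<close>; hence for \<open>X\<close> coindependent in \<open>M\e\<close> the set \<open>X + e\<close> has a transversal \<open>g\<close>
  of \<open>A\<close>. Rooting the tree at \<open>v = g(e)\<close> gives every other vertex \<open>u \<le> k\<close> its own edge \<open>m\<close>,
  and \<open>A\<^sub>u - e \<subseteq> B\<^sub>m\<close>; the indices \<open>i > k\<close> move to \<open>i - 1\<close>. This turns \<open>g\<close> into a
  transversal of \<open>X\<close> in \<open>B\<close>. Neither the minimality of \<open>G\<close>, nor its acyclicity, nor the
  value of \<open>r\<close> is needed.
\<close>

lemma list_crosses_boundary:
  assumes "p \<noteq> []" "hd p \<in> S" "last p \<notin> S"
  shows "\<exists>t < length p - 1. p ! t \<in> S \<and> p ! Suc t \<notin> S"
  using assms
proof (induction p)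
  case Nil
  then show ?case by simp
next
  case (Cons x xs)
  show ?case
  proof (cases "xs \<noteq> [] \<and> hd xs \<in> S")
    case True
    with Cons obtain t where "t < length xs - 1" "xs ! t \<in> S" "xs ! Suc t \<notin> S"
      by auto
    then show ?thesis by (intro exI[of _ "Suc t"]) auto
  next
    case False
    with Cons.prems have "xs \<noteq> []" "hd xs \<notin> S" by auto
    with Cons.prems show ?thesis by (intro exI[of _ 0]) (simp add: hd_conv_nth)
  qed
qed

lemma connected_on_exit_edge:
  assumes "connected_on Ed V" "a \<in> S" "S \<subseteq> V" "w \<in> V - S"
  shows "\<exists>x y. x \<in> S \<and> y \<in> V - S \<and> {x, y} \<in> Ed"
proof -
  obtain p where p: "walk_in Ed V p" "hd p = a" "last p = w"
    using assms unfolding connected_on_def by blast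
  then obtain t where t: "t < length p - 1" "p ! t \<in> S" "p ! Suc t \<notin> S"
    using list_crosses_boundary[of p S] assms unfolding walk_in_def by auto
  have "p ! Suc t \<in> V"
    using p(1) t(1) nth_mem[of "Suc t" p] unfolding walk_in_def by auto
  moreover have "{p ! t, p ! Suc t} \<in> Ed"
    using p(1) t(1) unfolding walk_in_def by blast
  ultimately show ?thesis using t by blast
qed

text \<open>Growing a tree from the root \<open>v\<close>: each newly reached vertex is assigned the edge through
  which it was reached. Assigned edges stay inside the reached set \<open>S\<close>, so the new edge,
  which leaves \<open>S\<close>, is distinct from all earlier ones.\<close>
lemma edge_assignment_extend:
  assumes "finite V" "connected_on Ed V" "v \<in> S" "S \<subseteq> V" "inj_on \<phi> (S - {v})"
    "\<forall>u\<in>S - {v}. \<phi> u \<in> Ed \<and> u \<in> \<phi> u \<and> \<phi> u \<subseteq> S"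
  shows "\<exists>\<phi>. inj_on \<phi> (V - {v}) \<and> (\<forall>u\<in>V - {v}. \<phi> u \<in> Ed \<and> u \<in> \<phi> u)"
  using assms(3-)
proof (induction "card (V - S)" arbitrary: S \<phi>)
  case 0
  then have "S = V" using \<open>finite V\<close> by auto
  with 0 show ?case by blast
next
  case (Suc n)
  then have "V - S \<noteq> {}" by (metis card.empty nat.distinct(1))
  then obtain w where "w \<in> V - S" by blast
  then obtain a b where ab: "a \<in> S" "b \<in> V - S" "{a, b} \<in> Ed"
    using connected_on_exit_edge[OF \<open>connected_on Ed V\<close> \<open>v \<in> S\<close> \<open>S \<subseteq> V\<close>] by blast
  let ?\<phi> = "\<phi>(b := {a, b})"
  have new_edge: "{a, b} \<notin> \<phi> ` (S - {v})"
  proof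
    assume "{a, b} \<in> \<phi> ` (S - {v})"
    then obtain u where u: "u \<in> S - {v}" "\<phi> u = {a, b}" by blast
    have "\<phi> u \<subseteq> S" using bspec[OF Suc.prems(4) u(1)] by (elim conjE)
    with u(2) ab(2) show False by auto
  qed
  have "V - insert b S = (V - S) - {b}" by blast
  then have "card (V - insert b S) = card (V - S) - 1"
    using card_Diff_singleton[OF ab(2)] by simp
  then have "n = card (V - insert b S)" using Suc.hyps(2) by linarith
  moreover have "v \<in> insert b S" "insert b S \<subseteq> V" using Suc.prems(1,2) ab(2) by auto
  moreover have "inj_on ?\<phi> (insert b S - {v})"
  proof -
    have "b \<notin> S - {v}" using ab(2) by blast
    then have "?\<phi> ` (S - {v}) = \<phi> ` (S - {v})" unfolding fun_upd_image by (simp only: if_False)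
    moreover have "inj_on ?\<phi> (S - {v})" using Suc.prems(3) new_edge by (rule inj_on_fun_updI)
    moreover have "insert b S - {v} = insert b (S - {v})" using ab(2) \<open>v \<in> S\<close> by blast
    ultimately show ?thesis using new_edge \<open>b \<notin> S - {v}\<close> by simp
  qed
  moreover have "\<forall>u\<in>insert b S - {v}. ?\<phi> u \<in> Ed \<and> u \<in> ?\<phi> u \<and> ?\<phi> u \<subseteq> insert b S"
    using Suc.prems(4) ab by auto
  ultimately show ?case by (rule Suc.hyps(1))
qed

lemma connected_on_indexed_edge_assignment:
  assumes "finite V" "connected_on ((\<lambda>m. {a m, b m}) ` M) V" "v \<in> V"
  shows "\<exists>\<psi>. inj_on \<psi> (V - {v}) \<and> (\<forall>u\<in>V - {v}. \<psi> u \<in> M \<and> u \<in> {a (\<psi> u), b (\<psi> u)})"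
proof -
  let ?edge = "\<lambda>m. {a m, b m}"
  obtain \<phi> where \<phi>: "inj_on \<phi> (V - {v})" "\<forall>u\<in>V - {v}. \<phi> u \<in> ?edge ` M \<and> u \<in> \<phi> u"
    using edge_assignment_extend[OF assms(1,2), of v "{v}" "\<lambda>_. {}"] assms(3) by auto
  have "inj_on (inv_into M ?edge \<circ> \<phi>) (V - {v})"
    using \<phi> by (intro comp_inj_on inj_on_inv_into) auto
  moreover have "(inv_into M ?edge \<circ> \<phi>) u \<in> M \<and> u \<in> ?edge ((inv_into M ?edge \<circ> \<phi>) u)"
    if "u \<in> V - {v}" for u
    using \<phi>(2) that f_inv_into_f[of "\<phi> u" ?edge M] by (simp add: inv_into_into)
  ultimately show ?thesis by blast
qed

lemma matroid_del_indep:
  assumes "matroid E I"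
  shows "matroid (E - {e}) (del_indep I e)"
proof -
  have fin: "finite E" and empty: "I {}" and sub: "\<And>X. I X \<Longrightarrow> X \<subseteq> E"
    and down: "\<And>X Y. I Y \<Longrightarrow> X \<subseteq> Y \<Longrightarrow> I X"
    and aug: "\<And>X Y. I X \<Longrightarrow> I Y \<Longrightarrow> card X < card Y \<Longrightarrow> \<exists>y\<in>Y - X. I (insert y X)"
    using assms unfolding matroid_def by blast+
  show ?thesis
    unfolding matroid_def
  proof (intro conjI allI impI)
    show "finite (E - {e})" using fin by blast
    show "del_indep I e {}" using empty unfolding del_indep_def by blast
    show "X \<subseteq> E - {e}" if "del_indep I e X" for X
      using that sub unfolding del_indep_def by blast
    show "del_indep I e X" if "del_indep I e Y \<and> X \<subseteq> Y" for X Y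
      using that down unfolding del_indep_def by blast
    show "\<exists>y\<in>Y - X. del_indep I e (insert y X)"
      if XY: "del_indep I e X \<and> del_indep I e Y \<and> card X < card Y" for X Y
    proof -
      obtain y where "y \<in> Y - X" "I (insert y X)"
        using XY aug unfolding del_indep_def by blast
      with XY show ?thesis unfolding del_indep_def by auto
    qed
  qed
qed

lemma basis_card_ge:
  assumes M: "matroid E I" and B: "basis E I B" and X: "I X"
  shows "card X \<le> card B"
proof (rule ccontr)
  assume "\<not> card X \<le> card B"
  moreover have "I B" using B unfolding basis_def by blast
  moreover have aug: "\<And>X Y. I X \<Longrightarrow> I Y \<Longrightarrow> card X < card Y \<Longrightarrow> \<exists>y\<in>Y - X. I (insert y X)"
    using M unfolding matroid_def by blast
  ultimately obtain y where "y \<in> X - B" "I (insert y B)"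
    using aug[of B X] X by force
  with B show False unfolding basis_def by blast
qed

lemma basis_of_deletion:
  assumes M: "matroid E I" and B0: "basis E I B0" "e \<notin> B0"
    and B: "basis (E - {e}) (del_indep I e) B"
  shows "basis E I B"
  unfolding basis_def
proof (intro conjI allI impI)
  show "I B" using B unfolding basis_def del_indep_def by blast
  fix X
  assume X: "I X \<and> B \<subseteq> X"
  have "del_indep I e B0" using B0 unfolding basis_def del_indep_def by blast
  then have "card B0 \<le> card B"
    using basis_card_ge[OF matroid_del_indep[OF M] B] by blast
  moreover have "card X \<le> card B0" using basis_card_ge[OF M B0(1)] X by blast
  moreover have "finite X"
    using M X finite_subset[of X E] unfolding matroid_def by blast
  ultimately show "X = B" using card_seteq[of X B] X by simp
qed

lemma dual_indep_insert_deleted: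
  assumes M: "matroid E I" and e: "dual_indep E I {e}"
    and X: "dual_indep (E - {e}) (del_indep I e) X"
  shows "dual_indep E I (insert e X)"
proof -
  obtain B0 where B0: "basis E I B0" "e \<notin> B0" using e unfolding dual_indep_def by blast
  obtain B where B: "basis (E - {e}) (del_indep I e) B" "X \<inter> B = {}"
    using X unfolding dual_indep_def by blast
  have "basis E I B" using basis_of_deletion[OF M B0 B(1)] .
  moreover have "e \<notin> B" using B(1) unfolding basis_def del_indep_def by blast
  moreover have "insert e X \<subseteq> E" using e X unfolding dual_indep_def by blast
  ultimately show ?thesis using B(2) unfolding dual_indep_def by blast
qed

lemma subset_cl: "X \<subseteq> E \<Longrightarrow> X \<subseteq> cl E I X"
  unfolding cl_def by (auto simp: insert_absorb)

lemma is_presentation_indep_iff: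
  "is_presentation E N A n \<Longrightarrow> N X \<longleftrightarrow> X \<subseteq> E \<and> partial_transversal A n X"
  unfolding is_presentation_def by blast

lemma is_presentation_singleton_indep:
  assumes pres: "is_presentation E N A n" and i: "i \<in> {1..n}" and x: "x \<in> A i"
  shows "N {x}"
proof -
  have "x \<in> E" using pres i x unfolding is_presentation_def by (blast dest: conjunct1)
  moreover have "partial_transversal A n {x}"
    unfolding partial_transversal_def using i x by (intro exI[of _ "\<lambda>_. i"]) auto
  ultimately show ?thesis by (simp add: is_presentation_indep_iff[OF pres])
qed

lemma partial_transversal_mono:
  assumes "\<forall>i\<in>{1..n}. A i \<subseteq> A' i" "partial_transversal A n X"
  shows "partial_transversal A' n X"
proof -
  obtain f where "inj_on f X" "f ` X \<subseteq> {1..n}" "\<forall>x\<in>X. x \<in> A (f x)"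
    using assms(2) unfolding partial_transversal_def by blast
  with assms(1) show ?thesis unfolding partial_transversal_def by blast
qed

lemma is_presentation_sandwich:
  assumes C: "is_presentation E N C n" and BDC: "\<forall>i\<in>{1..n}. B i \<subseteq> D i \<and> D i \<subseteq> C i"
    and B: "\<forall>X. N X \<longrightarrow> partial_transversal B n X"
  shows "is_presentation E N D n"
  unfolding is_presentation_def
proof (intro conjI allI)
  have C_sub: "\<forall>i\<in>{1..n}. C i \<subseteq> E" and C_indep: "\<And>X. N X \<longleftrightarrow> X \<subseteq> E \<and> partial_transversal C n X"
    using C unfolding is_presentation_def by blast+
  have BD: "\<forall>i\<in>{1..n}. B i \<subseteq> D i" and DC: "\<forall>i\<in>{1..n}. D i \<subseteq> C i"
    using BDC by blast+
  show "\<forall>i\<in>{1..n}. D i \<subseteq> E" using C_sub DC by blast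
  fix X
  show "N X \<longleftrightarrow> X \<subseteq> E \<and> partial_transversal D n X"
  proof
    assume "N X"
    then show "X \<subseteq> E \<and> partial_transversal D n X"
      using C_indep B partial_transversal_mono[OF BD] by simp
  next
    assume "X \<subseteq> E \<and> partial_transversal D n X"
    then show "N X" using C_indep partial_transversal_mono[OF DC] by simp
  qed
qed

lemma partial_transversal_contract:
  assumes k: "1 \<le> k" "k \<le> r"
    and g: "inj_on g (insert e X)" "g ` insert e X \<subseteq> {1..r}" "\<forall>x\<in>X. x \<in> A (g x)"
    and e: "e \<notin> X"
    and \<psi>: "inj_on \<psi> ({1..k} - {g e})"
      "\<forall>u\<in>{1..k} - {g e}. \<psi> u \<in> {1..k-1} \<and> A u - {e} \<subseteq> B (\<psi> u)"
    and shift: "\<forall>i\<in>{k<..r}. A i \<subseteq> B (i - 1)"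
  shows "partial_transversal B (r - 1) X"
proof -
  define \<sigma> where "\<sigma> i = (if i \<le> k then \<psi> i else i - 1)" for i
  let ?U = "({1..k} - {g e}) \<union> {k<..r}"
  have below_k: "\<sigma> ` ({1..k} - {g e}) \<subseteq> {..<k}"
  proof
    fix i assume "i \<in> \<sigma> ` ({1..k} - {g e})"
    then obtain u where u: "u \<in> {1..k} - {g e}" "i = \<sigma> u" by blast
    with \<psi>(2) have "\<psi> u \<in> {1..k-1}" by blast
    moreover have "\<sigma> u = \<psi> u" using u(1) by (simp add: \<sigma>_def)
    ultimately show "i \<in> {..<k}" using u(2) by auto
  qed
  have above_k: "\<sigma> ` {k<..r} \<subseteq> {k..}" by (auto simp: \<sigma>_def)
  have "inj_on \<sigma> ({1..k} - {g e})"
    using \<psi>(1) by (rule inj_on_cong[THEN iffD1, rotated]) (simp add: \<sigma>_def)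
  moreover have "inj_on \<sigma> {k<..r}"
    using k by (auto simp: \<sigma>_def inj_on_def)
  moreover have "\<sigma> ` ({1..k} - {g e}) \<inter> \<sigma> ` {k<..r} = {}"
    using below_k above_k by fastforce
  moreover have "({1..k} - {g e}) - {k<..r} = {1..k} - {g e}" "{k<..r} - ({1..k} - {g e}) = {k<..r}"
    by auto
  ultimately have inj_\<sigma>: "inj_on \<sigma> ?U"
    by (simp add: inj_on_Un)
  have gX: "g ` X \<subseteq> ?U"
  proof
    fix i assume "i \<in> g ` X"
    then obtain x where "x \<in> X" "i = g x" by blast
    with g(2) have "i \<in> {1..r}" by blast
    moreover have "i \<noteq> g e"
      using inj_onD[OF g(1), of x e] \<open>x \<in> X\<close> \<open>i = g x\<close> e by auto
    ultimately show "i \<in> ?U" by auto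
  qed
  have "inj_on g X" using g(1) by (rule inj_on_subset) blast
  moreover have "inj_on \<sigma> (g ` X)" using inj_\<sigma> gX by (rule inj_on_subset)
  ultimately have "inj_on (\<sigma> \<circ> g) X" by (rule comp_inj_on)
  moreover have "(\<sigma> \<circ> g) x \<in> {1..r-1} \<and> x \<in> B ((\<sigma> \<circ> g) x)" if x: "x \<in> X" for x
  proof (cases "g x \<le> k")
    case True
    with x gX have "g x \<in> {1..k} - {g e}" by auto
    with \<psi>(2) have "\<psi> (g x) \<in> {1..k-1}" "A (g x) - {e} \<subseteq> B (\<psi> (g x))" by blast+
    moreover have "x \<in> A (g x) - {e}" using g(3) x e by auto
    moreover have "(\<sigma> \<circ> g) x = \<psi> (g x)" using True by (simp add: \<sigma>_def)
    ultimately show ?thesis using k by auto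
  next
    case False
    with x gX have "g x \<in> {k<..r}" by auto
    moreover from this shift have "A (g x) \<subseteq> B (g x - 1)" by blast
    moreover have "x \<in> A (g x)" using g(3) x by blast
    moreover have "(\<sigma> \<circ> g) x = g x - 1" using False by (simp add: \<sigma>_def)
    ultimately show ?thesis using k by auto
  qed
  ultimately show ?thesis
    unfolding partial_transversal_def by (intro exI[of _ "\<sigma> \<circ> g"]) blast
qed

lemma merged_family_subset:
  fixes r k :: nat
  assumes A: "\<forall>i\<in>{1..r}. A i \<subseteq> E" and k: "1 \<le> k" "k \<le> r"
    and order: "\<forall>i\<in>{1..r}. e \<in> A i \<longleftrightarrow> i \<le> k"
    and ends: "\<forall>m\<in>{1..k-1}. ei m \<in> {1..k} \<and> ej m \<in> {1..k}"
    and B1: "\<forall>m\<in>{1..k-1}. B m = A (ei m) \<union> A (ej m) - {e}"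
    and B2: "\<forall>m\<in>{k..r-1}. B m = A (m + 1)"
  shows "\<forall>m\<in>{1..r-1}. B m \<subseteq> E - {e}"
proof
  fix m assume m: "m \<in> {1..r-1}"
  show "B m \<subseteq> E - {e}"
  proof (cases "m \<le> k - 1")
    case True
    with m have m': "m \<in> {1..k-1}" by auto
    with ends have "ei m \<in> {1..k}" "ej m \<in> {1..k}" by blast+
    with k have "ei m \<in> {1..r}" "ej m \<in> {1..r}" by auto
    with A have "A (ei m) \<subseteq> E" "A (ej m) \<subseteq> E" by blast+
    moreover have "B m = A (ei m) \<union> A (ej m) - {e}" using B1 m' by (rule bspec)
    ultimately show ?thesis by blast
  next
    case False
    with m k have m': "m \<in> {k..r-1}" and m1: "m + 1 \<in> {1..r}" "\<not> m + 1 \<le> k" by auto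
    have "B m = A (m + 1)" using B2 m' by (rule bspec)
    moreover have "A (m + 1) \<subseteq> E" using A m1(1) by blast
    moreover have "e \<notin> A (m + 1)" using order[rule_format, OF m1(1)] m1(2) by blast
    ultimately show ?thesis by blast
  qed
qed

lemma dual_deletion_indep_imp_partial_transversal:
  assumes M: "matroid E I" and pres: "is_presentation E (dual_indep E I) A r"
    and k: "1 \<le> k" "k \<le> r" and order: "\<forall>i\<in>{1..r}. e \<in> A i \<longleftrightarrow> i \<le> k"
    and conn: "connected_on ((\<lambda>m. {ei m, ej m}) ` {1..k-1}) {1..k}"
    and B1: "\<forall>m\<in>{1..k-1}. B m = A (ei m) \<union> A (ej m) - {e}"
    and B2: "\<forall>m\<in>{k..r-1}. B m = A (m + 1)"
    and X: "dual_indep (E - {e}) (del_indep I e) X"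
  shows "partial_transversal B (r - 1) X"
proof -
  have one: "1 \<in> {1..r}" using k by simp
  have "e \<in> A 1" using order[rule_format, OF one] k(1) by simp
  then have "dual_indep E I {e}" by (rule is_presentation_singleton_indep[OF pres one])
  then have "dual_indep E I (insert e X)" by (rule dual_indep_insert_deleted[OF M _ X])
  then have "partial_transversal A r (insert e X)" using is_presentation_indep_iff[OF pres] by simp
  then obtain g where g: "inj_on g (insert e X)" "g ` insert e X \<subseteq> {1..r}"
      "\<forall>x\<in>insert e X. x \<in> A (g x)"
    unfolding partial_transversal_def by blast
  then have "g e \<in> {1..r}" "e \<in> A (g e)" by blast+
  then have "g e \<in> {1..k}" using order[rule_format, of "g e"] by auto
  then obtain \<psi> where \<psi>: "inj_on \<psi> ({1..k} - {g e})"
      "\<forall>u\<in>{1..k} - {g e}. \<psi> u \<in> {1..k-1} \<and> u \<in> {ei (\<psi> u), ej (\<psi> u)}"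
    using connected_on_indexed_edge_assignment[OF finite_atLeastAtMost conn] by blast
  have tree_edges: "\<forall>u\<in>{1..k} - {g e}. \<psi> u \<in> {1..k-1} \<and> A u - {e} \<subseteq> B (\<psi> u)"
  proof
    fix u assume "u \<in> {1..k} - {g e}"
    with \<psi>(2) have "\<psi> u \<in> {1..k-1}" "u \<in> {ei (\<psi> u), ej (\<psi> u)}" by blast+
    moreover have "B (\<psi> u) = A (ei (\<psi> u)) \<union> A (ej (\<psi> u)) - {e}"
      using B1 \<open>\<psi> u \<in> {1..k-1}\<close> by (rule bspec)
    moreover have "A u \<subseteq> A (ei (\<psi> u)) \<union> A (ej (\<psi> u))"
      using \<open>u \<in> {ei (\<psi> u), ej (\<psi> u)}\<close> by (metis Un_upper1 Un_upper2 emptyE insertE)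
    ultimately show "\<psi> u \<in> {1..k-1} \<and> A u - {e} \<subseteq> B (\<psi> u)" by blast
  qed
  have shift: "\<forall>i\<in>{k<..r}. A i \<subseteq> B (i - 1)"
  proof
    fix i assume "i \<in> {k<..r}"
    with k have "i - 1 \<in> {k..r-1}" "i - 1 + 1 = i" by auto
    then show "A i \<subseteq> B (i - 1)" using B2[rule_format, of "i - 1"] by simp
  qed
  have "e \<notin> X" using X unfolding dual_indep_def by blast
  moreover have "\<forall>x\<in>X. x \<in> A (g x)" using g(3) by blast
  ultimately show ?thesis
    using partial_transversal_contract[OF k g(1,2) _ _ \<psi>(1) tree_edges shift] by blast
qed

theorem lemma3p7:
  fixes E :: "'a set" and I :: "'a set \<Rightarrow> bool" and A B C :: "nat \<Rightarrow> 'a set"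
    and r k j :: nat and e :: 'a and Ed :: "nat set set" and ei ej :: "nat \<Rightarrow> nat"
    and J :: "nat set"
  assumes M: "matroid E I"
    and r: "r = rank (dual_indep E I) E"
    and pres: "is_presentation E (dual_indep E I) A r"
    and eE: "e \<in> E"
    and k: "1 \<le> k" "k \<le> r"
    and order: "\<forall>i\<in>{1..r}. e \<in> A i \<longleftrightarrow> i \<le> k"
    and G: "minimal_presenting E I A r e Ed"
    and tree: "is_tree {1..k} Ed"
    and edges: "Ed = {{ei m, ej m} | m. m \<in> {1..k-1}}"
    and B1: "\<forall>m\<in>{1..k-1}. B m = A (ei m) \<union> A (ej m) - {e}"
    and B2: "\<forall>m\<in>{k..r-1}. B m = A (m + 1)"
    and J: "J \<subseteq> {1..r-1}"
    and C: "\<forall>m\<in>{1..r-1}. C m = (if m \<in> J then cl (E - {e}) (del_indep I e) (B m) else B m)"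
    and presC: "is_presentation (E - {e}) (dual_indep (E - {e}) (del_indep I e)) C (r - 1)"
    and jJ: "j \<in> J"
  shows "is_presentation (E - {e}) (dual_indep (E - {e}) (del_indep I e)) (C(j := B j)) (r - 1)"
proof -
  have Ed: "Ed = (\<lambda>m. {ei m, ej m}) ` {1..k-1}" using edges by blast
  have conn: "connected_on ((\<lambda>m. {ei m, ej m}) ` {1..k-1}) {1..k}"
    using tree Ed unfolding is_tree_def by simp
  have ends: "\<forall>m\<in>{1..k-1}. ei m \<in> {1..k} \<and> ej m \<in> {1..k}"
    using tree Ed unfolding is_tree_def simple_graph_def by blast
  have "\<forall>i\<in>{1..r}. A i \<subseteq> E" using pres unfolding is_presentation_def by blast
  then have B_sub: "\<forall>m\<in>{1..r-1}. B m \<subseteq> E - {e}"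
    using merged_family_subset[OF _ k order ends B1 B2] by blast
  have "B m \<subseteq> C m" if "m \<in> {1..r-1}" for m
    using that C B_sub subset_cl[of "B m" "E - {e}"] by simp
  moreover have "j \<in> {1..r-1}" using J jJ by blast
  ultimately have "\<forall>m\<in>{1..r-1}. B m \<subseteq> (C(j := B j)) m \<and> (C(j := B j)) m \<subseteq> C m"
    by auto
  moreover have "\<forall>X. dual_indep (E - {e}) (del_indep I e) X \<longrightarrow> partial_transversal B (r - 1) X"
    using dual_deletion_indep_imp_partial_transversal[OF M pres k order conn B1 B2] by blast
  ultimately show ?thesis by (rule is_presentation_sandwich[OF presC])
qed

end
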